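(* As $s\to 1^+$ (real $s$), $$\lim_{s\to1^+}(s-1)\prod_{p\equiv 1,4 \pmod 5}\left(1-\frac{1}{p^s}\right)^{-2}=\frac{\sqrt5\,\ln(9+4\sqrt5)}{3\pi^2}\prod_{p\equiv 1,4\pmod 5}\left(1-\frac{1}{p^2}\right)^{-1},$$ where the products are over primes $p$ congruent to $1$ or $4$ modulo $5$. *)

theory Defs
  imports "HOL-Analysis.Analysis" "HOL-Computational_Algebra.Primes"
begin

definition P14 :: "nat set" where
  "P14 = {p. prime p \<and> (p mod 5 = 1 \<or> p mod 5 = 4)}"

definition prod_P14 :: "(nat \<Rightarrow> real) \<Rightarrow> real" where
  "prod_P14 g = (\<Prod>n. if n \<in> P14 then g n else 1)"

end

theory Submission
  imports Defs
begin

(* Let \<chi> be the Legendre symbol (n/5). The Euler factors of \<zeta>(s) L(s, \<chi>) are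
   (1 - p^-s)^-2 for p in P14, (1 - p^-2s)^-1 for p \<equiv> 2, 3 (mod 5) and (1 - 5^-s)^-1 at p = 5,
   so the product over P14 equals \<zeta>(s) L(s, \<chi>) / Q(s), where Q (correction) is an
   absolutely convergent product continuous up to s = 1. As s \<rightarrow> 1+, (s - 1) \<zeta>(s) \<rightarrow> 1 and
   L(s, \<chi>) \<rightarrow> L(1, \<chi>) = ln ((3 + \<surd>5)/2) / \<surd>5, obtained by integrating the generating
   function \<Sum> \<chi>(n+1) x^n = (1 - x^2)/(1 + x + x^2 + x^3 + x^4) over [0, 1]. Finally Q(1) is
   the Euler product of \<zeta>(2) over the primes outside P14 with the factor at 5 changed
   from 25/24 to 5/4, so Q(1) times the product of (1 - p^-2)^-1 over P14 is \<pi>^2/5. *)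

section \<open>The zeta function near 1\<close>

lemma inverse_powr_diff_bounds:
  fixes t a b :: real
  assumes t: "t > 0" and ab: "0 < a" "a < b"
  shows "t * (b - a) / b powr (t + 1) \<le> 1 / a powr t - 1 / b powr t"
    and "1 / a powr t - 1 / b powr t \<le> t * (b - a) / a powr (t + 1)"
proof -
  have "DERIV (\<lambda>x. x powr - t) x :> - t * x powr (- t - 1)" if "a \<le> x" "x \<le> b" for x
    using ab that by (intro has_real_derivative_powr) auto
  from MVT2[OF ab(2) this] obtain z where z: "a < z" "z < b"
    and mvt: "b powr - t - a powr - t = (b - a) * (- t * z powr (- t - 1))"
    by blast
  have "- t - 1 = - (t + 1)" by simp
  then have "z powr (- t - 1) = 1 / z powr (t + 1)" by (simp only: powr_minus_divide)
  with mvt have diff: "1 / a powr t - 1 / b powr t = t * (b - a) / z powr (t + 1)"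
    by (simp only: powr_minus_divide) (simp add: algebra_simps)
  have "z powr (t + 1) \<le> b powr (t + 1)" "a powr (t + 1) \<le> z powr (t + 1)"
    using z ab t by (auto intro!: powr_mono2)
  then show "t * (b - a) / b powr (t + 1) \<le> 1 / a powr t - 1 / b powr t"
    and "1 / a powr t - 1 / b powr t \<le> t * (b - a) / a powr (t + 1)"
    unfolding diff using ab z t by (auto intro!: divide_left_mono)
qed

text \<open>The term \<open>n = 0\<close> vanishes: \<open>0 powr s = 0\<close> and \<open>1 / 0 = 0\<close>.\<close>
definition zeta_real :: "real \<Rightarrow> real" where
  "zeta_real s = (\<Sum>n. 1 / real n powr s)"

lemma summable_inverse_powr: "s > 1 \<Longrightarrow> summable (\<lambda>n. 1 / real n powr s)"
  using summable_real_powr_iff[of "- s"] by (simp add: powr_minus_divide)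

lemma zeta_real_bounds:
  assumes s: "s > 1"
  shows "1 \<le> (s - 1) * zeta_real s" and "(s - 1) * zeta_real s \<le> s"
proof -
  define g where "g n = real (Suc n) powr (1 - s)" for n
  have "g \<longlonglongrightarrow> 0"
    unfolding g_def using s
    by (intro tendsto_neg_powr filterlim_compose[OF filterlim_real_sequentially filterlim_Suc]) auto
  then have tel: "(\<lambda>n. g n - g (Suc n)) sums 1"
    using telescope_sums'[of g 0] by (simp add: g_def)
  have "1 - s = - (s - 1)" by simp
  then have g_eq: "g n = 1 / real (Suc n) powr (s - 1)" for n
    unfolding g_def by (simp only: powr_minus_divide)
  have tel_bounds: "(s - 1) * (1 / real (Suc (Suc n)) powr s) \<le> g n - g (Suc n)"
    "g n - g (Suc n) \<le> (s - 1) * (1 / real (Suc n) powr s)" for n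
    using inverse_powr_diff_bounds[of "s - 1" "real (Suc n)" "real (Suc (Suc n))"] s
    by (simp_all add: g_eq)
  have "(\<lambda>n. 1 / real n powr s) sums zeta_real s"
    unfolding zeta_real_def using summable_inverse_powr[OF s] by (rule summable_sums)
  then have zeta1: "(\<lambda>n. 1 / real (Suc n) powr s) sums zeta_real s"
    by (subst sums_Suc_iff) simp
  then have zeta2: "(\<lambda>n. 1 / real (Suc (Suc n)) powr s) sums (zeta_real s - 1)"
    using sums_Suc_iff[of "\<lambda>n. 1 / real (Suc n) powr s" "zeta_real s - 1"] by simp
  show "1 \<le> (s - 1) * zeta_real s"
    using sums_le[OF tel_bounds(2) tel sums_mult[OF zeta1, of "s - 1"]] by simp
  have "(s - 1) * (zeta_real s - 1) \<le> 1"
    using sums_le[OF tel_bounds(1) sums_mult[OF zeta2, of "s - 1"] tel] by simp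
  then show "(s - 1) * zeta_real s \<le> s" by (simp add: algebra_simps)
qed

lemma tendsto_zeta_real_residue: "((\<lambda>s. (s - 1) * zeta_real s) \<longlongrightarrow> 1) (at_right 1)"
proof (rule tendsto_sandwich[of "\<lambda>_. 1" _ _ "\<lambda>s. s"])
  show "\<forall>\<^sub>F s in at_right 1. 1 \<le> (s - 1) * zeta_real s"
    "\<forall>\<^sub>F s in at_right 1. (s - 1) * zeta_real s \<le> s"
    using eventually_at_right_less[of "1::real"] by (auto elim!: eventually_mono intro: zeta_real_bounds)
qed (simp_all add: tendsto_ident_at)

section \<open>Euler products\<close>

definition completely_multiplicative :: "(nat \<Rightarrow> real) \<Rightarrow> bool" where
  "completely_multiplicative f \<longleftrightarrow> f 1 = 1 \<and> (\<forall>m n. f (m * n) = f m * f n)"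

lemma completely_multiplicative_prod:
  assumes "completely_multiplicative f"
  shows "f (\<Prod>x\<in>B. h x) = (\<Prod>x\<in>B. f (h x))"
  using assms unfolding completely_multiplicative_def
  by (induction B rule: infinite_finite_induct) simp_all

lemma completely_multiplicative_power:
  assumes "completely_multiplicative f"
  shows "f (p ^ k) = f p ^ k"
  using assms unfolding completely_multiplicative_def by (induction k) simp_all

definition smooth_numbers :: "nat set \<Rightarrow> nat set" where
  "smooth_numbers A = {n. n > 0 \<and> prime_factors n \<subseteq> A}"

lemma bij_betw_prime_power_products:
  assumes "finite A" "\<And>p. p \<in> A \<Longrightarrow> prime p"
  shows "bij_betw (\<lambda>g. \<Prod>p\<in>A. p ^ g p) (PiE A (\<lambda>_. UNIV)) (smooth_numbers A)"
proof (rule bij_betwI')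
  fix g h :: "nat \<Rightarrow> nat" assume g: "g \<in> PiE A (\<lambda>_. UNIV)" and h: "h \<in> PiE A (\<lambda>_. UNIV)"
  show "((\<Prod>p\<in>A. p ^ g p) = (\<Prod>p\<in>A. p ^ h p)) = (g = h)"
  proof
    assume eq: "(\<Prod>p\<in>A. p ^ g p) = (\<Prod>p\<in>A. p ^ h p)"
    show "g = h"
    proof (rule PiE_ext[OF g h])
      fix q assume q: "q \<in> A"
      have "multiplicity q (\<Prod>p\<in>A. p ^ g p) = multiplicity q (\<Prod>p\<in>A. p ^ h p)"
        using eq by simp
      then show "g q = h q"
        using multiplicity_prod_prime_powers[OF assms assms(2)[OF q]] q by simp
    qed
  qed simp
next
  fix g :: "nat \<Rightarrow> nat"
  have pos: "(\<Prod>p\<in>A. p ^ g p) > 0"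
    using assms prime_gt_0_nat by (intro prod_pos) auto
  have "prime_factors (\<Prod>p\<in>A. p ^ g p) \<subseteq> A"
  proof
    fix q assume "q \<in> prime_factors (\<Prod>p\<in>A. p ^ g p)"
    then have "prime q" and "multiplicity q (\<Prod>p\<in>A. p ^ g p) > 0"
      using pos by (auto simp: prime_factors_multiplicity)
    then show "q \<in> A"
      using multiplicity_prod_prime_powers[OF assms] by (auto split: if_splits)
  qed
  then show "(\<Prod>p\<in>A. p ^ g p) \<in> smooth_numbers A"
    using pos by (simp add: smooth_numbers_def)
next
  fix n assume "n \<in> smooth_numbers A"
  then have n: "n > 0" and sub: "prime_factors n \<subseteq> A"
    by (auto simp: smooth_numbers_def)
  have "n = (\<Prod>p \<in> prime_factors n. p ^ multiplicity p n)"
    using prime_factorization_nat[OF n] .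
  also have "\<dots> = (\<Prod>p\<in>A. p ^ multiplicity p n)"
    using n assms by (intro prod.mono_neutral_left sub) (auto simp: prime_factors_multiplicity)
  also have "\<dots> = (\<Prod>p\<in>A. p ^ restrict (\<lambda>p. multiplicity p n) A p)"
    by simp
  finally show "\<exists>g\<in>PiE A (\<lambda>_. UNIV). n = (\<Prod>p\<in>A. p ^ g p)"
    by (intro bexI[of _ "restrict (\<lambda>p. multiplicity p n) A"]) auto
qed

lemma has_sum_geometric:
  fixes x :: real
  assumes "\<bar>x\<bar> < 1"
  shows "((\<lambda>k. x ^ k) has_sum inverse (1 - x)) UNIV"
proof (rule norm_summable_imp_has_sum)
  show "summable (\<lambda>n. norm (x ^ n))"
    using summable_geometric[of "\<bar>x\<bar>"] assms by (simp add: power_abs)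
  show "(\<lambda>n. x ^ n) sums inverse (1 - x)"
    using geometric_sums[of x] assms by (simp add: inverse_eq_divide)
qed

lemma euler_product_finite:
  assumes f: "completely_multiplicative f" and less_1: "\<And>p. prime p \<Longrightarrow> \<bar>f p\<bar> < 1"
    and A: "finite A" "\<And>p. p \<in> A \<Longrightarrow> prime p"
  shows "(\<Prod>p\<in>A. inverse (1 - f p)) = infsum f (smooth_numbers A)"
proof -
  have "(\<Prod>p\<in>A. inverse (1 - f p)) = (\<Prod>p\<in>A. infsum (\<lambda>k. f p ^ k) UNIV)"
    using has_sum_geometric less_1 A by (intro prod.cong refl) (metis infsumI)
  also have "\<dots> = infsum (\<lambda>g. \<Prod>p\<in>A. f p ^ g p) (PiE A (\<lambda>_. UNIV))"
  proof (rule infsum_prod_PiE_abs[symmetric, OF A(1)])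
    fix p assume "p \<in> A"
    then have "summable (\<lambda>k. norm (f p ^ k))"
      using summable_geometric[of "\<bar>f p\<bar>"] less_1 A by (simp add: power_abs)
    then show "(\<lambda>k. norm (f p ^ k)) summable_on UNIV"
      by (subst summable_on_UNIV_nonneg_real_iff) auto
  qed
  also have "\<dots> = infsum (\<lambda>g. f (\<Prod>p\<in>A. p ^ g p)) (PiE A (\<lambda>_. UNIV))"
    by (simp add: completely_multiplicative_prod[OF f] completely_multiplicative_power[OF f])
  also have "\<dots> = infsum f (smooth_numbers A)"
    by (rule infsum_reindex_bij_betw[OF bij_betw_prime_power_products[OF A]])
  finally show ?thesis .
qed

definition euler_factor :: "(nat \<Rightarrow> real) \<Rightarrow> nat \<Rightarrow> real" where
  "euler_factor f n = (if prime n then inverse (1 - f n) else 1)"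

lemma completely_multiplicative_summable_imp_0:
  assumes "completely_multiplicative f" "summable f"
  shows "f 0 = 0"
proof (rule ccontr)
  assume "f 0 \<noteq> 0"
  moreover have "f 0 = f 0 * f 0" "f 0 = f 0 * f n" for n
    using assms(1) unfolding completely_multiplicative_def by (metis mult_0)+
  ultimately have "f = (\<lambda>_. 1)"
    by (metis mult_cancel_left1)
  with summable_LIMSEQ_zero[OF assms(2)] show False
    by (simp add: LIMSEQ_const_iff)
qed

lemma atLeastAtMost_subset_smooth_numbers: "{1..N} \<subseteq> smooth_numbers {p. prime p \<and> p \<le> N}"
  by (auto simp: smooth_numbers_def in_prime_factors_iff intro: order.trans[OF dvd_imp_le])

lemma euler_partial_product_error:
  assumes f: "completely_multiplicative f" and less_1: "\<And>p. prime p \<Longrightarrow> \<bar>f p\<bar> < 1"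
    and abs_summable: "summable (\<lambda>n. \<bar>f n\<bar>)"
  shows "\<bar>(\<Sum>n. f n) - (\<Prod>n\<le>N. euler_factor f n)\<bar> \<le> (\<Sum>n. \<bar>f n\<bar>) - (\<Sum>n\<le>N. \<bar>f n\<bar>)"
proof -
  define T where "T = smooth_numbers {p. prime p \<and> p \<le> N}"
  have "summable f" by (rule summable_rabs_cancel[OF abs_summable])
  then have "(f has_sum (\<Sum>n. f n)) UNIV"
    using norm_summable_imp_has_sum[of f] abs_summable by (simp add: summable_sums)
  then have sum_f: "f summable_on UNIV" and sum_f_eq: "infsum f UNIV = (\<Sum>n. f n)"
    by (rule has_sum_imp_summable, rule infsumI)
  have "((\<lambda>n. \<bar>f n\<bar>) has_sum (\<Sum>n. \<bar>f n\<bar>)) UNIV"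
    using norm_summable_imp_has_sum[of "\<lambda>n. \<bar>f n\<bar>"] abs_summable by (simp add: summable_sums)
  then have sum_abs: "(\<lambda>n. \<bar>f n\<bar>) summable_on UNIV"
    and sum_abs_eq: "infsum (\<lambda>n. \<bar>f n\<bar>) UNIV = (\<Sum>n. \<bar>f n\<bar>)"
    by (rule has_sum_imp_summable, rule infsumI)
  have "(\<Prod>n\<le>N. euler_factor f n) = (\<Prod>p\<in>{p. prime p \<and> p \<le> N}. inverse (1 - f p))"
    unfolding euler_factor_def using prod.inter_filter[of "{..N}" "\<lambda>n. inverse (1 - f n)" prime]
    by (simp add: atMost_def conj_commute)
  also have "\<dots> = infsum f T"
    unfolding T_def by (rule euler_product_finite[OF f less_1]) auto
  finally have "(\<Sum>n. f n) - (\<Prod>n\<le>N. euler_factor f n) = infsum f (UNIV - T)"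
    using infsum_Diff[OF sum_f summable_on_subset[OF sum_f], of T] sum_f_eq by simp
  also have "\<bar>\<dots>\<bar> \<le> infsum (\<lambda>n. \<bar>f n\<bar>) (UNIV - T)"
    using norm_infsum_bound[of f "UNIV - T"] summable_on_subset[OF sum_abs, of "UNIV - T"] by simp
  also have "\<dots> \<le> infsum (\<lambda>n. \<bar>f n\<bar>) (- {..N})"
  proof (rule infsum_mono_neutral)
    fix n assume "n \<in> (UNIV - T) - (- {..N})"
    then have "n \<le> N" "n \<notin> {1..N}"
      using atLeastAtMost_subset_smooth_numbers[of N] unfolding T_def by blast+
    then have "n = 0" by simp
    then show "\<bar>f n\<bar> \<le> 0"
      using completely_multiplicative_summable_imp_0[OF f \<open>summable f\<close>] by simp
  qed (auto intro: summable_on_subset[OF sum_abs])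
  also have "\<dots> = (\<Sum>n. \<bar>f n\<bar>) - (\<Sum>n\<le>N. \<bar>f n\<bar>)"
    using infsum_Diff[OF sum_abs, of "{..N}"] sum_abs_eq by (simp add: Compl_eq_Diff_UNIV)
  finally show ?thesis .
qed

lemma euler_partial_products_tendsto:
  assumes f: "completely_multiplicative f" and less_1: "\<And>p. prime p \<Longrightarrow> \<bar>f p\<bar> < 1"
    and abs_summable: "summable (\<lambda>n. \<bar>f n\<bar>)"
  shows "(\<lambda>N. \<Prod>n\<le>N. euler_factor f n) \<longlonglongrightarrow> (\<Sum>n. f n)"
proof -
  have "(\<lambda>N. (\<Sum>n. \<bar>f n\<bar>) - (\<Sum>n\<le>N. \<bar>f n\<bar>)) \<longlonglongrightarrow> 0"
    using tendsto_diff[OF tendsto_const[of "\<Sum>n. \<bar>f n\<bar>"] summable_LIMSEQ'[OF abs_summable]]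
    by simp
  then have "(\<lambda>N. (\<Sum>n. f n) - (\<Prod>n\<le>N. euler_factor f n)) \<longlonglongrightarrow> 0"
    by (rule Lim_null_comparison[rotated])
       (use euler_partial_product_error[OF assms] in \<open>auto intro: always_eventually\<close>)
  from tendsto_diff[OF tendsto_const[of "\<Sum>n. f n"] this] show ?thesis
    by simp
qed

lemma exp_neg_abs_le_inverse_one_minus:
  fixes x :: real
  assumes "\<bar>x\<bar> < 1"
  shows "exp (- \<bar>x\<bar>) \<le> inverse (1 - x)"
proof (cases "x \<ge> 0")
  case True
  have "exp (- \<bar>x\<bar>) \<le> 1" by simp
  also have "1 \<le> inverse (1 - x)" using True assms by (simp add: field_simps)
  finally show ?thesis .
next
  case False
  have "inverse (exp \<bar>x\<bar>) \<le> inverse (1 + \<bar>x\<bar>)"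
    using exp_ge_add_one_self[of "\<bar>x\<bar>"] by (intro le_imp_inverse_le) auto
  then show ?thesis using False by (simp add: exp_minus)
qed

lemma euler_product:
  assumes f: "completely_multiplicative f" and less_1: "\<And>p. prime p \<Longrightarrow> \<bar>f p\<bar> < 1"
    and abs_summable: "summable (\<lambda>n. \<bar>f n\<bar>)"
  shows "euler_factor f has_prod (\<Sum>n. f n)"
proof -
  note partial = euler_partial_products_tendsto[OF assms]
  \<comment> \<open>A convergent product needs a nonzero limit; the partial products stay above
    \<open>exp (- \<Sum>n. \<bar>f n\<bar>)\<close>.\<close>
  have "exp (- (\<Sum>n. \<bar>f n\<bar>)) \<le> (\<Prod>n\<le>N. euler_factor f n)" for N
  proof -
    have "exp (- (\<Sum>n. \<bar>f n\<bar>)) \<le> exp (\<Sum>n\<le>N. - \<bar>f n\<bar>)"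
      using sum_le_suminf[OF abs_summable, of "{..N}"] by (simp add: sum_negf)
    also have "\<dots> = (\<Prod>n\<le>N. exp (- \<bar>f n\<bar>))" by (simp add: exp_sum)
    also have "\<dots> \<le> (\<Prod>n\<le>N. euler_factor f n)"
      by (intro prod_mono) (auto simp: euler_factor_def exp_neg_abs_le_inverse_one_minus less_1)
    finally show ?thesis .
  qed
  then have "exp (- (\<Sum>n. \<bar>f n\<bar>)) \<le> (\<Sum>n. f n)"
    by (intro LIMSEQ_le_const[OF partial]) auto
  then have pos: "(\<Sum>n. f n) > 0"
    using exp_gt_zero[of "- (\<Sum>n. \<bar>f n\<bar>)"] by linarith
  have "euler_factor f n \<noteq> 0" for n
    using less_1[of n] by (auto simp: euler_factor_def)
  then have "convergent_prod (euler_factor f)"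
    using partial pos by (subst convergent_prod_iff_nz_lim) auto
  then show "euler_factor f has_prod (\<Sum>n. f n)"
    by (rule convergent_prod_tendsto_imp_has_prod[OF _ partial])
qed

lemma completely_multiplicative_divide_powr:
  assumes "completely_multiplicative c"
  shows "completely_multiplicative (\<lambda>n. c n / real n powr s)"
  using assms unfolding completely_multiplicative_def by (simp add: powr_mult)

lemma euler_product_dirichlet_series:
  assumes c: "completely_multiplicative c" "\<And>n. \<bar>c n\<bar> \<le> 1" and s: "s > 1"
  shows "euler_factor (\<lambda>n. c n / real n powr s) has_prod (\<Sum>n. c n / real n powr s)"
proof -
  have term_bound: "\<bar>c n / real n powr s\<bar> \<le> 1 / real n powr s" for n
    using c(2)[of n] by (simp add: abs_mult divide_right_mono)
  have "\<bar>c p / real p powr s\<bar> < 1" if "prime p" for p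
  proof -
    have "1 < real p powr 1" using prime_gt_1_nat[OF that] by simp
    also have "\<dots> \<le> real p powr s" using prime_gt_1_nat[OF that] s by (intro powr_mono) auto
    finally have "1 / real p powr s < 1" by (simp add: divide_less_eq)
    with term_bound[of p] show ?thesis by linarith
  qed
  moreover have "summable (\<lambda>n. \<bar>c n / real n powr s\<bar>)"
    by (rule summable_comparison_test'[OF summable_inverse_powr[OF s]]) (use term_bound in simp)
  ultimately show ?thesis
    by (rule euler_product[OF completely_multiplicative_divide_powr[OF c(1)]])
qed

lemma zeta_real_has_prod:
  assumes "s > 1"
  shows "euler_factor (\<lambda>n. 1 / real n powr s) has_prod zeta_real s"
  using euler_product_dirichlet_series[of "\<lambda>_. 1", OF _ _ assms]
  by (simp add: zeta_real_def completely_multiplicative_def)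

section \<open>The character modulo 5\<close>

definition chi5 :: "nat \<Rightarrow> real" where
  "chi5 n = (if n mod 5 = 1 \<or> n mod 5 = 4 then 1 else if n mod 5 = 2 \<or> n mod 5 = 3 then -1 else 0)"

lemma chi5_mod: "chi5 (n mod 5) = chi5 n"
  by (simp add: chi5_def)

lemma chi5_period: "chi5 (5 * k + j) = chi5 j"
proof -
  have "(5 * k + j) mod 5 = j mod 5" by presburger
  then show ?thesis by (metis chi5_mod)
qed

lemma completely_multiplicative_chi5: "completely_multiplicative chi5"
proof -
  have "chi5 (m * n) = chi5 m * chi5 n" for m n
  proof -
    have "m mod 5 < 5" "n mod 5 < 5" by simp_all
    then have "m mod 5 \<in> {0, 1, 2, 3, 4}" "n mod 5 \<in> {0, 1, 2, 3, 4}" by auto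
    then have "chi5 ((m mod 5) * (n mod 5)) = chi5 (m mod 5) * chi5 (n mod 5)"
      by (elim insertE emptyE) (simp_all add: chi5_def)
    then show ?thesis
      by (metis chi5_mod mod_mult_eq)
  qed
  then show ?thesis by (simp add: completely_multiplicative_def chi5_def)
qed

lemma abs_chi5_le_1: "\<bar>chi5 n\<bar> \<le> 1"
  by (simp add: chi5_def)

definition L_chi5 :: "real \<Rightarrow> real" where
  "L_chi5 s = (\<Sum>n. chi5 n / real n powr s)"

lemma L_chi5_has_prod: "s > 1 \<Longrightarrow> euler_factor (\<lambda>n. chi5 n / real n powr s) has_prod L_chi5 s"
  unfolding L_chi5_def
  by (rule euler_product_dirichlet_series[OF completely_multiplicative_chi5 abs_chi5_le_1])

definition chi5_block :: "nat \<Rightarrow> real \<Rightarrow> real" where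
  "chi5_block k s = 1 / real (5*k+1) powr s - 1 / real (5*k+2) powr s
                  - 1 / real (5*k+3) powr s + 1 / real (5*k+4) powr s"

lemma L_chi5_sums_blocks:
  assumes "s > 1"
  shows "(\<lambda>k. chi5_block k s) sums L_chi5 s"
proof -
  have "summable (\<lambda>n. chi5 n / real n powr s)"
    by (rule summable_comparison_test'[OF summable_inverse_powr[OF assms]])
       (use abs_chi5_le_1 in \<open>simp add: abs_mult divide_right_mono\<close>)
  then have "(\<lambda>n. chi5 n / real n powr s) sums L_chi5 s"
    unfolding L_chi5_def by (rule summable_sums)
  then have "(\<lambda>k. \<Sum>n\<in>{k*5..<k*5+5}. chi5 n / real n powr s) sums L_chi5 s"
    by (rule sums_group) simp
  moreover have block: "(\<Sum>n\<in>{k*5..<k*5+5}. chi5 n / real n powr s) = chi5_block k s" for k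
  proof -
    have "{k*5..<k*5+5} = {5*k, 5*k+1, 5*k+2, 5*k+3, 5*k+4}" by auto
    moreover have "chi5 (5*k) = 0" "chi5 (5*k+1) = 1" "chi5 (5*k+2) = -1"
      "chi5 (5*k+3) = -1" "chi5 (5*k+4) = 1"
      using chi5_period[of k 0] chi5_period[of k 1] chi5_period[of k 2] chi5_period[of k 3]
        chi5_period[of k 4]
      by (simp_all add: chi5_def del: One_nat_def)
    ultimately show ?thesis
      by (simp add: chi5_block_def)
  qed
  ultimately show ?thesis
    by (simp only: block)
qed

lemma chi5_block_bounds:
  assumes s: "1 \<le> s" "s \<le> 2"
  shows "0 \<le> chi5_block k s" and "chi5_block k s \<le> 18 / real (Suc k) ^ 2"
proof -
  define a where "a = real (5*k+1)"
  have a: "a \<ge> 1" by (simp add: a_def)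
  have block: "chi5_block k s = (1 / a powr s - 1 / (a+1) powr s) - (1 / (a+2) powr s - 1 / (a+3) powr s)"
    by (simp add: chi5_block_def a_def add_ac)
  have "s > 0" using s by simp
  note d1 = inverse_powr_diff_bounds[OF this, of a "a+1"]
   and d2 = inverse_powr_diff_bounds[OF this, of "a+2" "a+3"]
  have "s / (a+2) powr (s+1) \<le> s / (a+1) powr (s+1)"
    using a s by (intro divide_left_mono powr_mono2 mult_pos_pos) auto
  then show "0 \<le> chi5_block k s"
    unfolding block using d1 d2 a by simp
  have "chi5_block k s \<le> s / a powr (s+1) - s / (a+3) powr (s+1)"
    unfolding block using d1 d2 a by simp
  also have "\<dots> = s * (1 / a powr (s+1) - 1 / (a+3) powr (s+1))"
    by (simp add: field_simps)
  also have "\<dots> \<le> s * ((s+1) * 3 / a powr (s+1+1))"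
    using inverse_powr_diff_bounds(2)[of "s+1" a "a+3"] a s by (intro mult_left_mono) auto
  also have "\<dots> \<le> 2 * (3 * 3 / a powr 3)"
  proof (intro mult_mono)
    have "a powr 3 \<le> a powr (s+1+1)" using a s by (intro powr_mono) auto
    then have "1 / a powr (s+1+1) \<le> 1 / a powr 3" using a by (intro divide_left_mono) auto
    then show "(s + 1) * 3 / a powr (s + 1 + 1) \<le> 3 * 3 / a powr 3"
      using s a by (simp add: divide_inverse mult_mono)
  qed (use s a in auto)
  also have "\<dots> = 18 / a ^ 3" using a by (simp add: powr_realpow)
  also have "\<dots> \<le> 18 / real (Suc k) ^ 2"
  proof -
    have "real (Suc k) ^ 2 \<le> a ^ 2" unfolding a_def by (intro power_mono) auto
    also have "a ^ 2 \<le> a ^ 3" using a by (intro power_increasing) auto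
    finally show ?thesis using a by (intro divide_left_mono) auto
  qed
  finally show "chi5_block k s \<le> 18 / real (Suc k) ^ 2" .
qed

lemma continuous_on_chi5_block_sum: "continuous_on {1..2} (\<lambda>s. \<Sum>k. chi5_block k s)"
proof (rule uniform_limit_theorem)
  show "uniform_limit {1..2} (\<lambda>n s. \<Sum>k<n. chi5_block k s) (\<lambda>s. \<Sum>k. chi5_block k s) sequentially"
  proof (rule Weierstrass_m_test)
    show "summable (\<lambda>k. 18 / real (Suc k) ^ 2)"
      using summable_mult[OF sums_summable[OF inverse_squares_sums], of 18] by simp
  qed (use chi5_block_bounds in auto)
  show "\<forall>\<^sub>F n in sequentially. continuous_on {1..2} (\<lambda>s. \<Sum>k<n. chi5_block k s)"
    unfolding chi5_block_def by (intro always_eventually allI continuous_intros) auto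
qed simp

definition phi :: real where "phi = (1 + sqrt 5) / 2"
definition psi :: real where "psi = (1 - sqrt 5) / 2"

lemma phi_psi:
  "phi + psi = 1" "phi * psi = -1" "phi - psi = sqrt 5" "phi > 0" "psi \<ge> -1"
proof -
  have "sqrt 5 \<le> (3::real)"
    using real_sqrt_le_mono[of 5 9] by (simp add: real_sqrt_eq_iff)
  then show "psi \<ge> -1" unfolding psi_def by simp
  show "phi > 0" unfolding phi_def by (intro divide_pos_pos add_pos_nonneg) auto
  show "phi + psi = 1" "phi * psi = -1" "phi - psi = sqrt 5"
    by (simp_all add: phi_def psi_def field_simps)
qed

text \<open>Generating function \<open>\<Sum>n. chi5 (n + 1) * x ^ n = (1 - x - x\<^sup>2 + x\<^sup>3) / (1 - x\<^sup>5)\<close>.\<close>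
definition chi5_gen :: "real \<Rightarrow> real" where
  "chi5_gen x = (1 - x^2) / (1 + x + x^2 + x^3 + x^4)"

text \<open>Partial fractions: \<open>1 + x + x\<^sup>2 + x\<^sup>3 + x\<^sup>4 = (x\<^sup>2 + phi x + 1) (x\<^sup>2 + psi x + 1)\<close>.\<close>
definition chi5_gen_primitive :: "real \<Rightarrow> real" where
  "chi5_gen_primitive x = (ln (x^2 + phi * x + 1) - ln (x^2 + psi * x + 1)) / sqrt 5"

lemma chi5_gen_primitive_deriv:
  assumes x: "x \<ge> 0"
  shows "DERIV chi5_gen_primitive x :> chi5_gen x"
proof -
  have "phi * x \<ge> 0" using phi_psi(4) x by simp
  then have qa: "x^2 + phi * x + 1 > 0"
    using zero_le_power2[of x] by linarith
  have "x^2 - x + 1 > 0"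
    using zero_le_power2[of "x - 1/2"] by (simp add: power2_eq_square algebra_simps)
  moreover have "psi * x \<ge> -x"
    using phi_psi(5) x by (metis mult_minus_left mult_1 mult_right_mono)
  ultimately have qb: "x^2 + psi * x + 1 > 0" by linarith
  have "DERIV (\<lambda>x. ln (x^2 + c * x + 1)) x :> (2 * x + c) / (x^2 + c * x + 1)"
    if "x^2 + c * x + 1 > 0" for c
    using that by (auto intro!: derivative_eq_intros)
  then have deriv: "DERIV chi5_gen_primitive x :>
      ((2*x + phi) / (x^2 + phi*x + 1) - (2*x + psi) / (x^2 + psi*x + 1)) / sqrt 5"
    unfolding chi5_gen_primitive_def[abs_def] using qa qb by (intro DERIV_cdivide DERIV_diff)
  have "(x^2 + phi*x + 1) * (x^2 + psi*x + 1)
      = x^4 + (phi + psi) * x^3 + (2 + phi * psi) * x^2 + (phi + psi) * x + 1"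
    by (simp add: algebra_simps power2_eq_square power3_eq_cube power4_eq_xxxx)
  also have "\<dots> = 1 + x + x^2 + x^3 + x^4"
    using phi_psi(1,2) by simp
  finally have denom: "(x^2 + phi*x + 1) * (x^2 + psi*x + 1) = 1 + x + x^2 + x^3 + x^4" .
  have numer: "(2*x + phi) * (x^2 + psi*x + 1) - (2*x + psi) * (x^2 + phi*x + 1)
      = (phi - psi) * (1 - x^2)"
    by (simp add: algebra_simps power2_eq_square)
  have "(2*x + phi) / (x^2 + phi*x + 1) - (2*x + psi) / (x^2 + psi*x + 1)
      = sqrt 5 * (1 - x^2) / (1 + x + x^2 + x^3 + x^4)"
    using qa qb by (simp add: diff_frac_eq numer denom phi_psi(3))
  with deriv show ?thesis
    unfolding chi5_gen_def by simp
qed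

lemma chi5_gen_bounds:
  assumes "0 \<le> x" "x \<le> 1"
  shows "0 \<le> chi5_gen x" and "chi5_gen x \<le> 1"
proof -
  have "0 < 1 + x + x^2 + x^3 + x^4" using assms by (intro add_pos_nonneg) auto
  moreover have "x^2 \<le> 1" using assms by (simp add: power_le_one)
  moreover have "1 - x^2 \<le> 1 + x + x^2 + x^3 + x^4" using assms by simp
  ultimately show "0 \<le> chi5_gen x" "chi5_gen x \<le> 1"
    unfolding chi5_gen_def by simp_all
qed

definition chi5_poly :: "nat \<Rightarrow> real \<Rightarrow> real" where
  "chi5_poly K x = (\<Sum>k<K. x^(5*k+1) / real (5*k+1) - x^(5*k+2) / real (5*k+2)
                          - x^(5*k+3) / real (5*k+3) + x^(5*k+4) / real (5*k+4))"

lemma has_real_derivative_power_divide: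
  "n > 0 \<Longrightarrow> m = n - 1 \<Longrightarrow> DERIV (\<lambda>x::real. x ^ n / real n) x :> x ^ m"
  using DERIV_cdivide[OF DERIV_pow[of n x], of "real n"] by simp

lemma chi5_poly_deriv_identity:
  "(\<Sum>k<K. x^(5*k) - x^(5*k+1) - x^(5*k+2) + x^(5*k+3)) * (1 + x + x^2 + x^3 + x^4)
    = (1 - x^(5*K)) * (1 - (x::real)^2)"
proof (induction K)
  case (Suc K)
  have "(x^(5*K) - x^(5*K+1) - x^(5*K+2) + x^(5*K+3)) * (1 + x + x^2 + x^3 + x^4)
      = x^(5*K) * (1 - x^5) * (1 - x^2)"
    by (simp add: power_add algebra_simps power2_eq_square power3_eq_cube
        power4_eq_xxxx numeral_eq_Suc)
  with Suc show ?case
    by (simp add: distrib_right power_add algebra_simps)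
qed simp

lemma chi5_poly_deriv:
  assumes "x \<ge> 0"
  shows "DERIV (chi5_poly K) x :> (1 - x^(5*K)) * chi5_gen x"
proof -
  have "DERIV (chi5_poly K) x :> (\<Sum>k<K. x^(5*k) - x^(5*k+1) - x^(5*k+2) + x^(5*k+3))"
    unfolding chi5_poly_def[abs_def]
    by (intro DERIV_sum DERIV_add DERIV_diff has_real_derivative_power_divide) simp_all
  moreover have "0 < 1 + x + x^2 + x^3 + x^4" using assms by (intro add_pos_nonneg) auto
  then have "(\<Sum>k<K. x^(5*k) - x^(5*k+1) - x^(5*k+2) + x^(5*k+3)) = (1 - x^(5*K)) * chi5_gen x"
    unfolding chi5_gen_def times_divide_eq_right
    by (subst eq_divide_eq) (simp only: chi5_poly_deriv_identity, simp)
  ultimately show ?thesis by simp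
qed

lemma chi5_poly_approx_primitive:
  shows "0 \<le> chi5_gen_primitive 1 - chi5_poly K 1"
    and "chi5_gen_primitive 1 - chi5_poly K 1 \<le> 1 / real (5*K+1)"
proof -
  define B where "B x = chi5_gen_primitive x - chi5_poly K x" for x
  have B0: "B 0 = 0"
    by (simp add: B_def chi5_gen_primitive_def chi5_poly_def zero_power)
  have dB: "DERIV B x :> x^(5*K) * chi5_gen x" if "x \<ge> 0" for x
    using DERIV_diff[OF chi5_gen_primitive_deriv chi5_poly_deriv, OF that that, of K]
    unfolding B_def[abs_def] by (simp add: algebra_simps)
  have "B 0 \<le> B 1"
  proof (rule DERIV_nonneg_imp_nondecreasing[of 0 1 B])
    fix x :: real assume "0 \<le> x" "x \<le> 1"
    then show "\<exists>y. DERIV B x :> y \<and> y \<ge> 0"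
      using dB chi5_gen_bounds by (intro exI[of _ "x^(5*K) * chi5_gen x"]) auto
  qed simp
  then show "0 \<le> chi5_gen_primitive 1 - chi5_poly K 1"
    using B0 by (simp add: B_def)
  define C where "C x = x^(5*K+1) / real (5*K+1) - B x" for x
  have "C 0 \<le> C 1"
  proof (rule DERIV_nonneg_imp_nondecreasing[of 0 1 C])
    fix x :: real assume x: "0 \<le> x" "x \<le> 1"
    have "DERIV C x :> x^(5*K) - x^(5*K) * chi5_gen x"
      unfolding C_def[abs_def] by (intro DERIV_diff has_real_derivative_power_divide dB x) simp_all
    moreover have "x^(5*K) * chi5_gen x \<le> x^(5*K)"
      using chi5_gen_bounds[OF x] x by (simp add: mult_left_le)
    ultimately show "\<exists>y. DERIV C x :> y \<and> y \<ge> 0" by auto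
  qed simp
  then show "chi5_gen_primitive 1 - chi5_poly K 1 \<le> 1 / real (5*K+1)"
    using B0 by (simp add: C_def B_def)
qed

lemma chi5_block_sums_at_1: "(\<lambda>k. chi5_block k 1) sums (ln ((3 + sqrt 5) / 2) / sqrt 5)"
proof -
  have partial: "(\<Sum>k<K. chi5_block k 1) = chi5_poly K 1" for K
    by (simp add: chi5_poly_def chi5_block_def)
  have "\<bar>(\<Sum>k<K. chi5_block k 1) - chi5_gen_primitive 1\<bar> \<le> inverse (real (Suc K))" for K
  proof -
    have "1 / real (5*K+1) \<le> inverse (real (Suc K))" by (simp add: divide_simps)
    then show ?thesis using chi5_poly_approx_primitive[of K] unfolding partial by simp
  qed
  then have "(\<lambda>K. (\<Sum>k<K. chi5_block k 1) - chi5_gen_primitive 1) \<longlonglongrightarrow> 0"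
    by (intro Lim_null_comparison[OF _ LIMSEQ_inverse_real_of_nat] always_eventually) simp
  then have "(\<lambda>k. chi5_block k 1) sums chi5_gen_primitive 1"
    by (simp add: sums_def LIM_zero_iff)
  moreover have "chi5_gen_primitive 1 = ln ((3 + sqrt 5) / 2) / sqrt 5"
  proof -
    have pos: "2 + phi > 0" "2 + psi > 0" using phi_psi by auto
    have "chi5_gen_primitive 1 = (ln (2 + phi) - ln (2 + psi)) / sqrt 5"
      by (simp add: chi5_gen_primitive_def add_ac)
    also have "ln (2 + phi) - ln (2 + psi) = ln ((2 + phi) / (2 + psi))"
      using pos by (simp add: ln_div)
    also have "(2 + phi) / (2 + psi) = (3 + sqrt 5) / 2"
      using pos by (simp add: phi_def psi_def field_simps)
    finally show ?thesis .
  qed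
  ultimately show ?thesis by simp
qed

lemma tendsto_L_chi5: "(L_chi5 \<longlongrightarrow> ln ((3 + sqrt 5) / 2) / sqrt 5) (at_right 1)"
proof -
  have "((\<lambda>s. \<Sum>k. chi5_block k s) \<longlongrightarrow> (\<Sum>k. chi5_block k 1)) (at 1 within {1..2})"
    using continuous_on_chi5_block_sum by (simp add: continuous_on_def)
  then have "((\<lambda>s. \<Sum>k. chi5_block k s) \<longlongrightarrow> ln ((3 + sqrt 5) / 2) / sqrt 5) (at_right 1)"
    using chi5_block_sums_at_1 at_within_Icc_at_right[of "1::real" 2] by (simp add: sums_iff)
  moreover have "\<forall>\<^sub>F s in at_right 1. (\<Sum>k. chi5_block k s) = L_chi5 s"
    using eventually_at_right_less[of "1::real"]
    by eventually_elim (metis L_chi5_sums_blocks sums_unique)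
  ultimately show ?thesis by (rule Lim_transform_eventually)
qed

section \<open>The product over P14\<close>

lemma prime_mod_5_cases:
  fixes p :: nat
  assumes "prime p"
  obtains "p = 5" | "p mod 5 = 1 \<or> p mod 5 = 4" | "p mod 5 = 2 \<or> p mod 5 = 3"
proof -
  have "p = 5" if "p mod 5 = 0"
  proof -
    have "5 dvd p" using that by presburger
    then show ?thesis using assms by (auto simp: prime_nat_iff)
  qed
  moreover have "p mod 5 < 5" by simp
  ultimately show ?thesis using that by linarith
qed

lemma inverse_prime_powr_le:
  fixes p :: nat
  assumes "prime p" "s \<ge> 1"
  shows "1 / real p powr s \<le> 1 / real p" and "1 / real p \<le> 1 / 2"
proof -
  have p: "real p \<ge> 2" using prime_ge_2_nat[OF assms(1)] by simp
  have "real p powr 1 \<le> real p powr s" using p assms by (intro powr_mono) auto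
  then show "1 / real p powr s \<le> 1 / real p" using p by (intro divide_left_mono) auto
  show "1 / real p \<le> 1 / 2" using p by simp
qed

lemma inverse_one_minus_bounds:
  fixes x :: real
  assumes "0 \<le> x" "x \<le> 1 / 2"
  shows "0 \<le> inverse (1 - x) - 1" and "inverse (1 - x) - 1 \<le> 2 * x"
proof -
  have eq: "inverse (1 - x) - 1 = x / (1 - x)" using assms by (simp add: field_simps)
  show "0 \<le> inverse (1 - x) - 1" unfolding eq using assms by simp
  have "x * (2 * x) \<le> x * 1" using assms by (intro mult_left_mono) auto
  then have "x \<le> 2 * x * (1 - x)" by (simp add: algebra_simps)
  then show "inverse (1 - x) - 1 \<le> 2 * x" unfolding eq using assms by (simp add: divide_le_eq)
qed

lemma inverse_one_minus_squared_bounds: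
  fixes x :: real
  assumes "0 \<le> x" "x \<le> 1 / 2"
  shows "0 \<le> inverse ((1 - x)^2) - 1" and "inverse ((1 - x)^2) - 1 \<le> 8 * x"
proof -
  have "(1/2)^2 \<le> (1 - x)^2" using assms by (intro power_mono) auto
  then have q: "(1 - x)^2 \<ge> 1/4" by (simp add: power2_eq_square)
  have eq: "inverse ((1 - x)^2) - 1 = x * (2 - x) / (1 - x)^2"
    using q by (simp add: field_simps power2_eq_square)
  show "0 \<le> inverse ((1 - x)^2) - 1" unfolding eq using assms by simp
  have "x * (2 - x) \<le> 8 * x * (1/4)" using assms by (simp add: algebra_simps)
  also have "\<dots> \<le> 8 * x * (1 - x)^2" using q assms by (intro mult_left_mono) auto
  finally show "inverse ((1 - x)^2) - 1 \<le> 8 * x" unfolding eq using q by (simp add: divide_le_eq)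
qed

lemma convergent_prod_if_summable_bound:
  fixes a M :: "nat \<Rightarrow> real"
  assumes "\<And>n. 0 \<le> a n - 1" "\<And>n. a n - 1 \<le> M n" "summable M"
  shows "convergent_prod a"
proof -
  have "summable (\<lambda>n. \<bar>a n - 1\<bar>)"
    using assms by (intro summable_comparison_test'[OF assms(3)]) auto
  moreover have "a n - 1 \<noteq> -1" for n
    using assms(1)[of n] by linarith
  ultimately have "convergent_prod (\<lambda>n. 1 + (a n - 1))"
    by (rule summable_imp_convergent_prod_real)
  then show ?thesis by simp
qed

text \<open>The Euler factors of \<open>\<zeta>(s) L(s, chi5)\<close> at the primes outside \<open>P14\<close>.\<close>
definition correction_factor :: "real \<Rightarrow> nat \<Rightarrow> real" where
  "correction_factor s n =
     (if prime n \<and> (n mod 5 = 2 \<or> n mod 5 = 3) then inverse (1 - (1 / real n powr s)^2)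
      else if n = 5 then inverse (1 - 1 / real n powr s) else 1)"

definition correction :: "real \<Rightarrow> real" where
  "correction s = (\<Prod>n. correction_factor s n)"

lemma euler_factors_zeta_L_chi5:
  "euler_factor (\<lambda>n. 1 / real n powr s) n * euler_factor (\<lambda>n. chi5 n / real n powr s) n
       = (if n \<in> P14 then inverse ((1 - 1 / real n powr s) ^ 2) else 1) * correction_factor s n"
proof (cases "prime n")
  case False
  then show ?thesis by (auto simp: euler_factor_def correction_factor_def P14_def)
next
  case True
  define x where "x = 1 / real n powr s"
  from True show ?thesis
  proof (cases rule: prime_mod_5_cases)
    case 1
    then show ?thesis by (simp add: euler_factor_def correction_factor_def P14_def chi5_def)
  next
    case 2
    then show ?thesis using True
      by (auto simp: euler_factor_def correction_factor_def P14_def chi5_def power2_eq_square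
          inverse_mult_distrib simp flip: x_def)
  next
    case 3
    have "inverse (1 - x) * inverse (1 + x) = inverse (1 - x^2)"
      by (simp add: power2_eq_square algebra_simps flip: inverse_mult_distrib)
    with 3 True show ?thesis
      by (auto simp: euler_factor_def correction_factor_def P14_def chi5_def simp flip: x_def)
  qed
qed

lemma correction_factor_bounds:
  assumes "s \<ge> 1"
  shows "0 \<le> correction_factor s n - 1" and "correction_factor s n - 1 \<le> 10 / real n ^ 2"
proof -
  define x where "x = 1 / real n powr s"
  let ?bounds = "0 \<le> correction_factor s n - 1 \<and> correction_factor s n - 1 \<le> 10 / real n ^ 2"
  have ?bounds if "prime n" "n mod 5 = 2 \<or> n mod 5 = 3"
  proof -
    have x: "0 \<le> x" "x \<le> 1 / real n" "1 / real n \<le> 1 / 2"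
      using inverse_prime_powr_le[OF that(1) assms] by (auto simp: x_def)
    then have a: "x^2 \<le> (1 / real n)^2" and "(1 / real n)^2 \<le> (1/2)^2"
      by (intro power_mono; simp)+
    then have b: "(1 / real n)^2 \<le> 1/4" by (simp add: power2_eq_square)
    have "10 * (1 / real n)^2 = 10 / real n ^ 2" by (simp add: power_divide)
    moreover have "2 * x^2 \<le> 10 * (1 / real n)^2"
      using a zero_le_power2[of "1 / real n"] by linarith
    ultimately have "x^2 \<le> 1 / 2" "2 * x^2 \<le> 10 / real n ^ 2"
      using a b by linarith+
    then show ?bounds
      using that inverse_one_minus_bounds[of "x^2"] by (simp add: correction_factor_def flip: x_def)
  qed
  moreover have ?bounds if "n = 5"
  proof -
    have "0 \<le> x" "x \<le> 1 / 5" using inverse_prime_powr_le(1)[of 5 s] assms that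
      by (auto simp: x_def)
    moreover have "correction_factor s n = inverse (1 - x)"
      using that by (simp add: correction_factor_def x_def)
    ultimately show ?bounds
      using that inverse_one_minus_bounds[of x] by simp
  qed
  ultimately show "0 \<le> correction_factor s n - 1" "correction_factor s n - 1 \<le> 10 / real n ^ 2"
    by (auto simp: correction_factor_def)
qed

lemma summable_inverse_square: "summable (\<lambda>n. c / real n ^ 2)"
  using summable_mult[OF summable_inverse_powr[of 2], of c] by simp

lemma convergent_prod_correction_factor: "s \<ge> 1 \<Longrightarrow> convergent_prod (correction_factor s)"
  by (rule convergent_prod_if_summable_bound[OF _ _ summable_inverse_square])
     (use correction_factor_bounds in auto)

lemma correction_ge_1:
  assumes "s \<ge> 1"
  shows "correction s \<ge> 1"
proof -
  have "(\<lambda>N. \<Prod>n<N. correction_factor s n) \<longlonglongrightarrow> correction s"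
    unfolding correction_def
    using convergent_prod_correction_factor[OF assms] by (intro has_prod_imp_tendsto' convergent_prod_has_prod)
  moreover have "1 \<le> (\<Prod>n<N. correction_factor s n)" for N
    using correction_factor_bounds(1)[OF assms] by (intro prod_ge_1) auto
  ultimately show ?thesis by (intro LIMSEQ_le_const) auto
qed

lemma continuous_on_correction_factor: "continuous_on {1..2} (\<lambda>s. correction_factor s n)"
proof (cases "prime n")
  case True
  have "continuous_on {1..2} (\<lambda>s. inverse (1 - (1 / real n powr s) ^ k))" if "k > 0" for k
  proof (intro continuous_intros ballI)
    fix s :: real assume "s \<in> {1..2}"
    then have "(1 / real n powr s) ^ k \<le> (1 / 2) ^ k"
      using inverse_prime_powr_le[OF True, of s] by (intro power_mono) auto
    also have "\<dots> < 1" using that by (simp add: power_less_one_iff)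
    finally show "1 - (1 / real n powr s) ^ k \<noteq> 0" by simp
  qed (use prime_gt_0_nat[OF True] in auto)
  from this[of 1] this[of 2] True show ?thesis
    unfolding correction_factor_def by (cases "n mod 5 = 2 \<or> n mod 5 = 3"; cases "n = 5") auto
next
  case False
  then have "n \<noteq> 5" by auto
  with False show ?thesis by (simp add: correction_factor_def)
qed

lemma tendsto_correction: "(correction \<longlongrightarrow> correction 1) (at_right 1)"
proof -
  have "uniformly_convergent_on {1..2} (\<lambda>N s. \<Prod>n<N. correction_factor s n)"
  proof (rule uniformly_convergent_on_prod'[OF continuous_on_correction_factor])
    show "uniformly_convergent_on {1..2} (\<lambda>N s. \<Sum>n<N. norm (correction_factor s n - 1))"
      by (rule Weierstrass_m_test'[OF _ summable_inverse_square[of 10]])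
         (use correction_factor_bounds in auto)
  qed simp
  then have "uniform_limit {1..2} (\<lambda>N s. \<Prod>n<N. correction_factor s n) correction sequentially"
    unfolding correction_def[abs_def]
    by (rule uniform_limit_prodinf) (use correction_factor_bounds in fastforce)
  then have "continuous_on {1..2} correction"
    by (rule uniform_limit_theorem[rotated])
       (simp_all add: always_eventually continuous_on_prod continuous_on_correction_factor)
  then have "(correction \<longlongrightarrow> correction 1) (at 1 within {1..2})"
    by (simp add: continuous_on_def)
  then show ?thesis
    using at_within_Icc_at_right[of "1::real" 2] by simp
qed

lemma convergent_prod_P14_inverse_powr:
  assumes s: "s > 1"
  shows "convergent_prod (\<lambda>n. if n \<in> P14 then inverse ((1 - 1 / real n powr s) ^ 2) else 1)"
proof (rule convergent_prod_if_summable_bound[OF _ _ summable_inverse_powr[OF s, THEN summable_mult]])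
  fix n
  have "1 / real n powr s \<le> 1 / 2" if "n \<in> P14"
    using inverse_prime_powr_le[of n s] s that by (force simp: P14_def)
  then show "0 \<le> (if n \<in> P14 then inverse ((1 - 1 / real n powr s) ^ 2) else 1) - 1"
    and "(if n \<in> P14 then inverse ((1 - 1 / real n powr s) ^ 2) else 1) - 1 \<le> 8 * (1 / real n powr s)"
    using inverse_one_minus_squared_bounds[of "1 / real n powr s"] by auto
qed

lemma convergent_prod_P14_inverse_square:
  "convergent_prod (\<lambda>n. if n \<in> P14 then inverse (1 - 1 / real n ^ 2) else 1)"
proof (rule convergent_prod_if_summable_bound[OF _ _ summable_inverse_square[of 2]])
  fix n
  have "1 / real n ^ 2 \<le> 1 / 2" if "n \<in> P14"
  proof -
    have "1 / real n \<le> 1 / 2"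
      using inverse_prime_powr_le(2)[of n 1] that by (simp add: P14_def)
    then have "(1 / real n)^2 \<le> (1 / 2)^2" by (intro power_mono) auto
    then show ?thesis by (simp add: power_divide)
  qed
  then show "0 \<le> (if n \<in> P14 then inverse (1 - 1 / real n ^ 2) else 1) - 1"
    and "(if n \<in> P14 then inverse (1 - 1 / real n ^ 2) else 1) - 1 \<le> 2 / real n ^ 2"
    using inverse_one_minus_bounds[of "1 / real n ^ 2"] by auto
qed

lemma prod_P14_eq_zeta_L_chi5:
  assumes s: "s > 1"
  shows "prod_P14 (\<lambda>p. inverse ((1 - 1 / real p powr s) ^ 2)) = zeta_real s * L_chi5 s / correction s"
proof -
  define P where "P n = (if n \<in> P14 then inverse ((1 - 1 / real n powr s) ^ 2) else 1)" for n
  have "convergent_prod P"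
    unfolding P_def using s by (rule convergent_prod_P14_inverse_powr)
  then have "(\<lambda>n. P n * correction_factor s n) has_prod (prodinf P * correction s)"
    unfolding correction_def using convergent_prod_correction_factor s
    by (intro has_prod_mult convergent_prod_has_prod) auto
  moreover have "(\<lambda>n. P n * correction_factor s n) has_prod (zeta_real s * L_chi5 s)"
    using has_prod_mult[OF zeta_real_has_prod L_chi5_has_prod, OF s s]
    by (simp add: euler_factors_zeta_L_chi5 P_def)
  ultimately have "prodinf P * correction s = zeta_real s * L_chi5 s"
    by (rule has_prod_unique2)
  moreover have "correction s \<noteq> 0" using correction_ge_1[of s] s by simp
  moreover have "prod_P14 (\<lambda>p. inverse ((1 - 1 / real p powr s) ^ 2)) = prodinf P"
    by (simp add: prod_P14_def P_def[abs_def])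
  ultimately show ?thesis
    by (simp add: field_simps)
qed

lemma zeta_real_2: "zeta_real 2 = pi^2 / 6"
proof -
  have "(\<lambda>n. 1 / real (Suc n) powr 2) sums (pi^2 / 6)"
    using inverse_squares_sums by (simp add: of_nat_power)
  then have "(\<lambda>n. 1 / real n powr 2) sums (pi^2 / 6)"
    by (subst (asm) sums_Suc_iff) simp
  then show ?thesis unfolding zeta_real_def by (simp add: sums_iff)
qed

lemma euler_factor_zeta_2:
  "euler_factor (\<lambda>n. 1 / real n powr 2) n
     = (if n \<in> P14 then inverse (1 - 1 / real n ^ 2) else 1) * correction_factor 1 n
       * (if n = 5 then 5 / 6 else 1)"
proof (cases "prime n")
  case True
  then show ?thesis
    by (cases rule: prime_mod_5_cases)
       (auto simp: euler_factor_def correction_factor_def P14_def power_divide)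
qed (auto simp: euler_factor_def correction_factor_def P14_def)

lemma prod_P14_times_correction_1:
  "prod_P14 (\<lambda>p. inverse (1 - 1 / real p ^ 2)) * correction 1 = pi^2 / 5"
proof -
  define R where "R n = (if n \<in> P14 then inverse (1 - 1 / real n ^ 2) else 1)" for n
  have "convergent_prod R"
    unfolding R_def by (rule convergent_prod_P14_inverse_square)
  then have "(\<lambda>n. R n * correction_factor 1 n) has_prod (prodinf R * correction 1)"
    unfolding correction_def using convergent_prod_correction_factor
    by (intro has_prod_mult convergent_prod_has_prod) auto
  then have "(\<lambda>n. R n * correction_factor 1 n * (if n = 5 then 5 / 6 else 1))
      has_prod (prodinf R * correction 1 * (5 / 6))"
    using has_prod_single[of 5 "\<lambda>_. 5 / 6 :: real"] by (rule has_prod_mult)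
  moreover have "euler_factor (\<lambda>n. 1 / real n powr 2) has_prod (pi^2 / 6)"
    using zeta_real_has_prod[of 2] by (simp add: zeta_real_2)
  moreover have "euler_factor (\<lambda>n. 1 / real n powr 2)
      = (\<lambda>n. R n * correction_factor 1 n * (if n = 5 then 5 / 6 else 1))"
    unfolding R_def by (rule ext) (rule euler_factor_zeta_2)
  ultimately have "prodinf R * correction 1 * (5 / 6) = pi^2 / 6"
    using has_prod_unique2 by metis
  then show ?thesis
    by (simp add: prod_P14_def R_def[abs_def] algebra_simps)
qed

lemma ln_9_plus_4_sqrt5: "ln (9 + 4 * sqrt 5) = 3 * ln ((3 + sqrt 5) / 2)"
proof -
  have "(3 + sqrt 5)^3 = 27 + 27 * sqrt 5 + 9 * (sqrt 5)^2 + (sqrt 5)^2 * sqrt (5::real)"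
    by (simp add: power3_eq_cube power2_eq_square algebra_simps)
  then have "((3 + sqrt 5) / 2) ^ 3 = 9 + 4 * sqrt (5::real)"
    by (simp add: power_divide)
  then show ?thesis
    by (metis ln_realpow add_pos_nonneg divide_pos_pos real_sqrt_ge_zero zero_less_numeral
        zero_le_numeral of_nat_numeral)
qed

lemma L_chi5_limit_div_correction_1:
  "ln ((3 + sqrt 5) / 2) / sqrt 5 / correction 1
     = sqrt 5 * ln (9 + 4 * sqrt 5) / (3 * pi ^ 2) * prod_P14 (\<lambda>p. inverse (1 - 1 / real p ^ 2))"
proof -
  define R where "R = prod_P14 (\<lambda>p. inverse (1 - 1 / real p ^ 2))"
  define l where "l = ln ((3 + sqrt 5) / 2)"
  have "R * correction 1 = pi^2 / 5"
    unfolding R_def by (rule prod_P14_times_correction_1)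
  then have inv: "1 / correction 1 = 5 * R / pi^2"
    using correction_ge_1[of 1] by (simp add: field_simps)
  have "l / sqrt 5 / correction 1 = l / sqrt 5 * (1 / correction 1)"
    by simp
  also have "\<dots> = l * (5 / sqrt 5) * R / pi^2"
    unfolding inv by (simp add: field_simps)
  also have "\<dots> = sqrt 5 * (3 * l) / (3 * pi ^ 2) * R"
    by (simp add: real_div_sqrt)
  finally show ?thesis
    unfolding R_def l_def ln_9_plus_4_sqrt5 .
qed

theorem mainTheorem7:
  shows "((\<lambda>s::real. (s - 1) * prod_P14 (\<lambda>p. inverse ((1 - 1 / real p powr s) ^ 2)))
          \<longlongrightarrow> sqrt 5 * ln (9 + 4 * sqrt 5) / (3 * pi ^ 2)
              * prod_P14 (\<lambda>p. inverse (1 - 1 / real p ^ 2))) (at_right 1)"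
proof -
  have "((\<lambda>s. (s - 1) * zeta_real s * L_chi5 s / correction s)
      \<longlongrightarrow> ln ((3 + sqrt 5) / 2) / sqrt 5 / correction 1) (at_right 1)"
    using tendsto_divide[OF tendsto_mult[OF tendsto_zeta_real_residue tendsto_L_chi5] tendsto_correction]
      correction_ge_1[of 1] by simp
  moreover have "\<forall>\<^sub>F s in at_right 1. (s - 1) * zeta_real s * L_chi5 s / correction s
      = (s - 1) * prod_P14 (\<lambda>p. inverse ((1 - 1 / real p powr s) ^ 2))"
    using eventually_at_right_less[of "1::real"]
    by (rule eventually_mono) (simp add: prod_P14_eq_zeta_L_chi5)
  ultimately show ?thesis
    unfolding L_chi5_limit_div_correction_1 by (rule Lim_transform_eventually)
qed

end
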